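(* Let $G$ and $T$ be graphs of order $n$, where $T$ is a tree. If $3\Delta(G)+\ell(T)-2<n$, then $G$ and $T$ pack.
   Context: All graphs are finite and simple; $\Delta(G)$ is the maximum degree of $G$ and $\ell(T)$ is the number of leaves (vertices of degree $1$) of $T$. For graphs $G$ and $H$ with $|V(G)|\ge |V(H)|$, we say $G$ and $H$ pack if there is an injective function $f:V(H)\to V(G)$ such that for every edge $xy\in E(H)$, $f(x)f(y)\notin E(G)$. *)

theory Defs
  imports Main
begin

definition sgraph :: "'a set \<Rightarrow> 'a set set \<Rightarrow> bool" where
  "sgraph V E \<longleftrightarrow> finite V \<and> (\<forall>e\<in>E. \<exists>x y. x \<noteq> y \<and> x \<in> V \<and> y \<in> V \<and> e = {x, y})"

definition adj :: "'a set set \<Rightarrow> 'a \<Rightarrow> 'a \<Rightarrow> bool" where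
  "adj E u v \<longleftrightarrow> {u, v} \<in> E"

definition degree :: "'a set \<Rightarrow> 'a set set \<Rightarrow> 'a \<Rightarrow> nat" where
  "degree V E v = card {u \<in> V. adj E u v}"

definition max_degree :: "'a set \<Rightarrow> 'a set set \<Rightarrow> nat" where
  "max_degree V E = Max (insert 0 (degree V E ` V))"

definition num_leaves :: "'a set \<Rightarrow> 'a set set \<Rightarrow> nat" where
  "num_leaves V E = card {v \<in> V. degree V E v = 1}"

definition connected_graph :: "'a set \<Rightarrow> 'a set set \<Rightarrow> bool" where
  "connected_graph V E \<longleftrightarrow> (\<forall>u\<in>V. \<forall>v\<in>V. (adj E)\<^sup>*\<^sup>* u v)"

definition is_cycle :: "'a set \<Rightarrow> 'a set set \<Rightarrow> 'a list \<Rightarrow> bool" where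
  "is_cycle V E cs \<longleftrightarrow> length cs \<ge> 3 \<and> distinct cs \<and> set cs \<subseteq> V \<and>
     (\<forall>i. Suc i < length cs \<longrightarrow> adj E (cs ! i) (cs ! Suc i)) \<and>
     adj E (last cs) (hd cs)"

definition acyclic_graph :: "'a set \<Rightarrow> 'a set set \<Rightarrow> bool" where
  "acyclic_graph V E \<longleftrightarrow> \<not> (\<exists>cs. is_cycle V E cs)"

definition is_tree :: "'a set \<Rightarrow> 'a set set \<Rightarrow> bool" where
  "is_tree V E \<longleftrightarrow> sgraph V E \<and> V \<noteq> {} \<and> connected_graph V E \<and> acyclic_graph V E"

text \<open>(VG,EG) and (VH,EH) pack (for |VG| \<ge> |VH|): injective f from VH into VG mapping
  edges of H to non-edges of G.\<close>
definition packs :: "'a set \<Rightarrow> 'a set set \<Rightarrow> 'b set \<Rightarrow> 'b set set \<Rightarrow> bool" where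
  "packs VG EG VH EH \<longleftrightarrow> (\<exists>f. inj_on f VH \<and> f ` VH \<subseteq> VG \<and>
     (\<forall>x\<in>VH. \<forall>y\<in>VH. {x, y} \<in> EH \<longrightarrow> {f x, f y} \<notin> EG))"

end

theory Submission
  imports Defs
begin

text \<open>
  Embed \<open>T\<close> into the complement of \<open>G\<close> one vertex at a time, always adding a vertex \<open>v\<close>
  with at most one neighbour \<open>u\<close> among the vertices \<open>S\<close> already embedded by \<open>f\<close>; such a
  vertex exists because \<open>T[S]\<close> is a forest. If some unused vertex of \<open>G\<close> is not adjacent
  to \<open>f u\<close>, map \<open>v\<close> there. Otherwise \<open>f u\<close> is adjacent to all \<open>n - |S|\<close> unused vertices;
  fix one of them, \<open>a\<close>, and move some \<open>z \<in> S\<close> to \<open>a\<close>, mapping \<open>v\<close> to \<open>f z\<close>. This requires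
  that \<open>z \<noteq> u\<close>, that \<open>f z\<close> is not adjacent to \<open>f u\<close> (which excludes at most
  \<open>\<Delta>(G) - (n - |S|)\<close> vertices), and that \<open>z\<close> is not a \<open>T\<close>-neighbour of one of the at most
  \<open>\<Delta>(G)\<close> vertices \<open>w\<close> with \<open>f w\<close> adjacent to \<open>a\<close>. Since the degrees of \<open>k\<close> vertices of a
  tree sum to at most \<open>2k + \<ell>(T) - 2\<close>, the last condition excludes at most
  \<open>2\<Delta>(G) + \<ell>(T) - 2\<close> vertices, and \<open>3\<Delta>(G) + \<ell>(T) - 2 < n\<close> leaves a choice for \<open>z\<close>.
\<close>

definition neighbours :: "'a set \<Rightarrow> 'a set set \<Rightarrow> 'a \<Rightarrow> 'a set" where
  "neighbours S E v = {u \<in> S. adj E u v}"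

lemma degree_eq_card_neighbours: "degree V E v = card (neighbours V E v)"
  by (simp add: degree_def neighbours_def)

lemma adj_commute: "adj E u v \<longleftrightarrow> adj E v u"
  by (simp add: adj_def insert_commute)

lemma sgraph_not_adj_self: "sgraph V E \<Longrightarrow> \<not> adj E x x"
  unfolding sgraph_def adj_def by (metis doubleton_eq_iff insert_absorb2)

lemma sgraph_adj_in_vertices: "sgraph V E \<Longrightarrow> adj E x y \<Longrightarrow> x \<in> V \<and> y \<in> V"
  unfolding sgraph_def adj_def by (metis doubleton_eq_iff)

definition is_path :: "'a set set \<Rightarrow> 'a list \<Rightarrow> bool" where
  "is_path E p \<longleftrightarrow> (\<forall>i. Suc i < length p \<longrightarrow> adj E (p ! i) (p ! Suc i))"

lemma is_path_Cons: "adj E y (hd p) \<Longrightarrow> is_path E p \<Longrightarrow> is_path E (y # p)"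
  by (cases p) (auto simp: is_path_def nth_Cons split: nat.splits)

lemma is_cycle_take_path:
  assumes "is_path E p" "distinct p" "set p \<subseteq> V"
    and "2 \<le> j" "j < length p" "adj E (p ! j) (p ! 0)"
  shows "is_cycle V E (take (Suc j) p)"
proof -
  have "length (take (Suc j) p) = Suc j" "p \<noteq> []"
    using assms(5) by auto
  then have "last (take (Suc j) p) = p ! j" "hd (take (Suc j) p) = p ! 0"
    by (simp_all add: last_conv_nth hd_conv_nth)
  then show ?thesis
    using assms by (auto simp: is_cycle_def is_path_def dest: in_set_takeD)
qed

lemma acyclic_exists_neighbours_le_1:
  assumes sg: "sgraph V E" and acyclic: "acyclic_graph V E"
    and S: "finite S" "S \<subseteq> V" "S \<noteq> {}"
  shows "\<exists>v\<in>S. card (neighbours S E v) \<le> 1"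
proof -
  define P where "P p \<longleftrightarrow> distinct p \<and> set p \<subseteq> S \<and> p \<noteq> [] \<and> is_path E p" for p
  obtain s where "s \<in> S" using S by auto
  then have "P [s]" by (simp add: P_def is_path_def)
  moreover have "length p < Suc (card S)" if "P p" for p
    using that S(1) by (metis P_def card_mono distinct_card less_Suc_eq_le)
  ultimately obtain p where p: "P p" and longest: "\<And>q. P q \<Longrightarrow> length q \<le> length p"
    using ex_has_greatest_nat[of P "[s]" length "Suc (card S)"] by blast
  have "neighbours S E (p ! 0) \<subseteq> {p ! 1}"
  proof
    fix y assume y: "y \<in> neighbours S E (p ! 0)"
    have "y \<in> set p"
    proof (rule ccontr)
      assume "y \<notin> set p"
      with p y have "P (y # p)"
        by (auto simp: P_def neighbours_def hd_conv_nth intro: is_path_Cons)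
      then show False using longest by fastforce
    qed
    then obtain j where j: "j < length p" "p ! j = y" by (auto simp: in_set_conv_nth)
    have "j \<noteq> 0" using j y sgraph_not_adj_self[OF sg] by (metis mem_Collect_eq neighbours_def)
    moreover have "\<not> 2 \<le> j"
    proof
      assume "2 \<le> j"
      then have "is_cycle V E (take (Suc j) p)"
        using p j y S(2) by (intro is_cycle_take_path) (auto simp: P_def neighbours_def)
      then show False using acyclic by (auto simp: acyclic_graph_def)
    qed
    ultimately show "y \<in> {p ! 1}" using j by (simp add: numeral_2_eq_2 not_le less_Suc_eq)
  qed
  then have "card (neighbours S E (p ! 0)) \<le> 1"
    using card_mono[of "{p ! 1}"] by fastforce
  moreover have "p ! 0 \<in> S" using p by (auto simp: P_def)
  ultimately show ?thesis by blast
qed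

lemma card_neighbours_le_remove:
  assumes "finite A"
  shows "card (neighbours A E x) \<le> card (neighbours (A - {v}) E x) + (if adj E v x then 1 else 0)"
proof -
  have "neighbours A E x \<subseteq> neighbours (A - {v}) E x \<union> (if adj E v x then {v} else {})"
    by (auto simp: neighbours_def)
  then have "card (neighbours A E x) \<le> card (neighbours (A - {v}) E x \<union> (if adj E v x then {v} else {}))"
    using assms by (intro card_mono) (auto simp: neighbours_def)
  also have "\<dots> \<le> card (neighbours (A - {v}) E x) + card (if adj E v x then {v} else {})"
    by (rule card_Un_le)
  finally show ?thesis by auto
qed

lemma acyclic_sum_card_neighbours:
  assumes sg: "sgraph V E" and acyclic: "acyclic_graph V E"
    and "finite S" "S \<subseteq> V" "S \<noteq> {}"
  shows "(\<Sum>x\<in>S. card (neighbours S E x)) + 2 \<le> 2 * card S"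
  using assms(3-5)
proof (induction S rule: finite_remove_induct)
  case (remove A)
  obtain v where v: "v \<in> A" "card (neighbours A E v) \<le> 1"
    using acyclic_exists_neighbours_le_1[OF sg acyclic remove.hyps(1) remove.prems] by blast
  show ?case
  proof (cases "A = {v}")
    case True
    then show ?thesis using sgraph_not_adj_self[OF sg, of v] by (simp add: neighbours_def)
  next
    case False
    define A' where "A' = A - {v}"
    have A': "finite A'" "A' \<subseteq> V" "A' \<noteq> {}" "card A = Suc (card A')"
      using False v remove.hyps(1) remove.prems by (auto simp: A'_def card_gt_0_iff)
    have IH: "(\<Sum>x\<in>A'. card (neighbours A' E x)) + 2 \<le> 2 * card A'"
      using remove.IH[OF v(1)] A' by (simp add: A'_def)
    have "(\<Sum>x\<in>A. card (neighbours A E x))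
        = card (neighbours A E v) + (\<Sum>x\<in>A'. card (neighbours A E x))"
      using v remove.hyps(1) by (simp add: A'_def sum.remove)
    also have "(\<Sum>x\<in>A'. card (neighbours A E x))
        \<le> (\<Sum>x\<in>A'. card (neighbours A' E x) + (if adj E v x then 1 else 0))"
      using remove.hyps(1) by (intro sum_mono) (simp add: A'_def card_neighbours_le_remove)
    also have "\<dots> = (\<Sum>x\<in>A'. card (neighbours A' E x)) + card (neighbours A' E v)"
      using A'(1) by (simp add: sum.distrib sum.inter_filter[symmetric] neighbours_def adj_commute)
    also have "card (neighbours A' E v) \<le> card (neighbours A E v)"
      using remove.hyps(1) by (intro card_mono) (auto simp: A'_def neighbours_def)
    finally show ?thesis using IH v(2) A'(4) by linarith
  qed
qed simp

lemma tree_degree_ge_1: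
  assumes tree: "is_tree V E" and two: "2 \<le> card V" and x: "x \<in> V"
  shows "1 \<le> degree V E x"
proof -
  have sg: "sgraph V E" and fin: "finite V"
    using tree by (auto simp: is_tree_def sgraph_def)
  obtain y where y: "y \<in> V" "y \<noteq> x"
    using two x by (metis card_le_Suc0_iff_eq fin not_less_eq_eq numeral_2_eq_2)
  then have "(adj E)\<^sup>*\<^sup>* x y"
    using tree x by (auto simp: is_tree_def connected_graph_def)
  then obtain z where "adj E x z"
    using y(2) by (metis converse_rtranclpE)
  then have "z \<in> neighbours V E x"
    using sgraph_adj_in_vertices[OF sg] by (auto simp: neighbours_def adj_commute)
  then show ?thesis
    using fin by (auto simp: degree_eq_card_neighbours neighbours_def Suc_le_eq card_gt_0_iff)
qed

lemma tree_sum_degree_le: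
  assumes tree: "is_tree V E" and two: "2 \<le> card V" and W: "W \<subseteq> V"
  shows "(\<Sum>w\<in>W. degree V E w) + 2 \<le> 2 * card W + num_leaves V E"
proof -
  have sg: "sgraph V E" and fin: "finite V" and acyclic: "acyclic_graph V E" and "V \<noteq> {}"
    using tree by (auto simp: is_tree_def sgraph_def)
  then have total: "(\<Sum>x\<in>V. degree V E x) + 2 \<le> 2 * card V"
    using acyclic_sum_card_neighbours[OF sg acyclic fin order_refl]
    by (simp add: degree_eq_card_neighbours)
  have "2 * card (V - W) = (\<Sum>x\<in>V - W. 2)"
    by simp
  also have "\<dots> \<le> (\<Sum>x\<in>V - W. degree V E x + (if degree V E x = 1 then 1 else 0))"
    using tree_degree_ge_1[OF tree two] by (intro sum_mono) force
  also have "\<dots> = (\<Sum>x\<in>V - W. degree V E x) + card {x \<in> V - W. degree V E x = 1}"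
    using fin by (simp add: sum.distrib sum.inter_filter[symmetric])
  also have "card {x \<in> V - W. degree V E x = 1} \<le> num_leaves V E"
    unfolding num_leaves_def using fin by (intro card_mono) auto
  finally have outside: "2 * card (V - W) \<le> (\<Sum>x\<in>V - W. degree V E x) + num_leaves V E"
    by simp
  have "(\<Sum>x\<in>V. degree V E x) = (\<Sum>x\<in>W. degree V E x) + (\<Sum>x\<in>V - W. degree V E x)"
    using fin W by (simp add: sum.subset_diff[of W V])
  moreover have "card (V - W) + card W = card V"
    using fin W by (metis card_Diff_subset card_mono finite_subset le_add_diff_inverse2)
  ultimately show ?thesis
    using total outside by linarith
qed

lemma degree_le_max_degree: "finite V \<Longrightarrow> v \<in> V \<Longrightarrow> degree V E v \<le> max_degree V E"
  unfolding max_degree_def by (intro Max_ge) auto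

definition packing_on :: "'a set \<Rightarrow> 'a set set \<Rightarrow> 'b set set \<Rightarrow> 'b set \<Rightarrow> ('b \<Rightarrow> 'a) \<Rightarrow> bool" where
  "packing_on VG EG ET S f \<longleftrightarrow> inj_on f S \<and> f ` S \<subseteq> VG \<and>
     (\<forall>x\<in>S. \<forall>y\<in>S. adj ET x y \<longrightarrow> \<not> adj EG (f x) (f y))"

lemma packing_on_card_unused:
  assumes "packing_on VG EG ET S f" "finite VG"
  shows "card (VG - f ` S) + card S = card VG"
proof -
  have "card (f ` S) = card S"
    using assms by (simp add: packing_on_def card_image)
  moreover have "card (f ` S) \<le> card VG"
    using assms by (intro card_mono) (auto simp: packing_on_def)
  moreover have "card (VG - f ` S) = card VG - card (f ` S)"
    using assms by (intro card_Diff_subset) (auto simp: packing_on_def finite_subset)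
  ultimately show ?thesis by simp
qed

lemma packing_on_insert:
  assumes f: "packing_on VG EG ET S f" and v: "v \<notin> S" "\<not> adj ET v v"
    and a: "a \<in> VG - f ` S"
    and free: "\<And>w. w \<in> S \<Longrightarrow> adj ET w v \<Longrightarrow> \<not> adj EG (f w) a"
  shows "packing_on VG EG ET (insert v S) (f(v := a))"
proof -
  have "\<not> adj EG ((f(v := a)) x) ((f(v := a)) y)"
    if "x \<in> insert v S" "y \<in> insert v S" "adj ET x y" for x y
    using that f v free by (cases "x = v"; cases "y = v")
      (auto simp: packing_on_def, metis adj_commute)
  then show ?thesis
    using f v a by (auto simp: packing_on_def inj_on_def)
qed

lemma packing_on_insert_swap:
  assumes f: "packing_on VG EG ET S f" and v: "v \<notin> S" and loopfree: "\<And>x. \<not> adj ET x x"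
    and z: "z \<in> S" "\<not> adj ET z v"
    and a: "a \<in> VG - f ` S"
    and v_fits: "\<And>w. w \<in> S \<Longrightarrow> adj ET w v \<Longrightarrow> \<not> adj EG (f w) (f z)"
    and z_fits: "\<And>w. w \<in> S \<Longrightarrow> adj ET z w \<Longrightarrow> \<not> adj EG a (f w)"
  shows "packing_on VG EG ET (insert v S) (f(v := f z, z := a))"
proof -
  let ?g = "f(v := f z, z := a)"
  have zv: "z \<noteq> v" using z v by auto
  have edge: "\<not> adj EG (?g x) (?g y)" if xy: "x \<in> insert v S" "y \<in> insert v S" "adj ET x y"
    and x: "x = v \<or> x = z" for x y
  proof (cases "x = v")
    case True
    with xy loopfree have "adj ET y v" "y \<noteq> v"
      by (auto simp: adj_commute)
    moreover from this xy z(2) have "y \<in> S" "y \<noteq> z"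
      by auto
    ultimately show ?thesis using True zv v_fits by (auto simp: adj_commute)
  next
    case False
    with x have "x = z" by simp
    with xy loopfree z(2) have "y \<in> S" "y \<noteq> v" "y \<noteq> z" "adj ET z y"
      by (auto simp: adj_commute)
    then show ?thesis using \<open>x = z\<close> zv z_fits by auto
  qed
  have "\<not> adj EG (?g x) (?g y)" if "x \<in> insert v S" "y \<in> insert v S" "adj ET x y" for x y
  proof (cases "x = v \<or> x = z \<or> y = v \<or> y = z")
    case True
    then show ?thesis
      using edge[of x y] edge[of y x] that by (metis adj_commute)
  next
    case False
    then show ?thesis using that f by (auto simp: packing_on_def)
  qed
  moreover have "inj_on ?g (insert v S)"
    using f v z a zv by (auto simp: packing_on_def inj_on_def)
  moreover have "?g ` insert v S \<subseteq> VG"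
    using f z a by (auto simp: packing_on_def)
  ultimately show ?thesis by (simp add: packing_on_def)
qed

lemma card_subset_neighbours_le_max_degree:
  assumes "finite V" "v \<in> V" "Y \<subseteq> neighbours V E v"
  shows "card Y \<le> max_degree V E"
proof -
  have "card Y \<le> degree V E v"
    using assms by (simp add: degree_eq_card_neighbours card_mono neighbours_def)
  also have "\<dots> \<le> max_degree V E"
    using assms(1,2) by (rule degree_le_max_degree)
  finally show ?thesis .
qed

lemma exists_swap_vertex:
  assumes finG: "finite VG" and tree: "is_tree VT ET"
    and card_eq: "card VG = card VT"
    and small: "3 * max_degree VG EG + num_leaves VT ET < card VT + 2"
    and f: "packing_on VG EG ET S f" and S: "insert v S \<subseteq> VT" "v \<notin> S"
    and u: "u \<in> S" "adj ET u v"
    and a: "a \<in> VG - f ` S"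
    and u_blocks: "VG - f ` S \<subseteq> neighbours VG EG (f u)"
  obtains z where "z \<in> S" "z \<noteq> u" "\<not> adj EG (f u) (f z)"
    "\<And>w. w \<in> S \<Longrightarrow> adj ET z w \<Longrightarrow> \<not> adj EG a (f w)"
proof -
  let ?D = "max_degree VG EG" and ?U = "VG - f ` S"
  have finT: "finite VT" using tree by (simp add: is_tree_def sgraph_def)
  have finS: "finite S" using S(1) finT by (meson finite_insert finite_subset)
  have inj: "inj_on f S" and fS: "f ` S \<subseteq> VG" using f unfolding packing_on_def by blast+
  have card_U: "card ?U + card S = card VT"
    using packing_on_card_unused[OF f finG] card_eq by simp
  have fu: "f u \<in> VG" using fS u by auto
  define B where "B = {z \<in> S. adj EG (f u) (f z)}"
  have "f ` B \<subseteq> neighbours VG EG (f u)"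
    using fS by (auto simp: B_def neighbours_def adj_commute)
  with u_blocks have "card (f ` B \<union> ?U) \<le> ?D"
    using fu finG by (intro card_subset_neighbours_le_max_degree) auto
  moreover have "card (f ` B) = card B"
    using inj by (intro card_image inj_on_subset[OF inj]) (auto simp: B_def)
  moreover have "card (f ` B \<union> ?U) = card (f ` B) + card ?U"
    using finS finG by (intro card_Un_disjoint) (auto simp: B_def)
  ultimately have card_B: "card B + card ?U \<le> ?D" by simp
  define W where "W = {w \<in> S. adj EG (f w) a}"
  have "f ` W \<subseteq> neighbours VG EG a"
    using fS by (auto simp: W_def neighbours_def)
  then have "card (f ` W) \<le> ?D"
    using a finG by (intro card_subset_neighbours_le_max_degree) auto
  moreover have "card (f ` W) = card W"
    using inj by (intro card_image inj_on_subset[OF inj]) (auto simp: W_def)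
  ultimately have card_W: "card W \<le> ?D" by simp
  define N where "N = (\<Union>w\<in>W. neighbours VT ET w)"
  have "card {u, v} \<le> card VT"
    using S u finT by (intro card_mono) auto
  moreover have "u \<noteq> v" using S(2) u(1) by blast
  ultimately have "2 \<le> card VT" by simp
  moreover have "W \<subseteq> VT"
    using S by (auto simp: W_def)
  ultimately have "(\<Sum>w\<in>W. degree VT ET w) + 2 \<le> 2 * card W + num_leaves VT ET"
    using tree by (intro tree_sum_degree_le)
  moreover have "card N \<le> (\<Sum>w\<in>W. degree VT ET w)"
    unfolding N_def degree_eq_card_neighbours using finS by (intro card_UN_le) (simp add: W_def)
  ultimately have card_N: "card N + 2 \<le> 2 * card W + num_leaves VT ET" by simp
  have "adj EG (f u) a"
    using a u_blocks by (auto simp: neighbours_def adj_commute)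
  with u have "v \<in> N"
    using S(1) by (auto simp: N_def W_def neighbours_def adj_commute)
  define Bad where "Bad = insert u (B \<union> N)"
  have "B \<subseteq> S" "N \<subseteq> VT"
    by (auto simp: B_def N_def neighbours_def)
  then have finBad: "finite Bad"
    using finS finT by (simp add: Bad_def finite_subset)
  have "card Bad \<le> Suc (card (B \<union> N))"
    using finBad by (simp add: Bad_def card_insert_if)
  then have "card Bad < card (insert v S)"
    using card_Un_le[of B N] card_U card_B card_W card_N small finS S(2) by simp
  then obtain z where z: "z \<in> insert v S" "z \<notin> Bad"
    using finBad card_mono by (metis not_le subsetI)
  show ?thesis
  proof
    show "z \<in> S" "z \<noteq> u" "\<not> adj EG (f u) (f z)"
      using z \<open>v \<in> N\<close> by (auto simp: Bad_def B_def)
    show "\<not> adj EG a (f w)" if "w \<in> S" "adj ET z w" for w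
      using z that S by (auto simp: Bad_def N_def W_def neighbours_def adj_commute)
  qed
qed

lemma packing_on_insert_low_degree:
  assumes finG: "finite VG" and tree: "is_tree VT ET"
    and card_eq: "card VG = card VT"
    and small: "3 * max_degree VG EG + num_leaves VT ET < card VT + 2"
    and f: "packing_on VG EG ET S f" and S: "insert v S \<subseteq> VT" "v \<notin> S"
    and low: "card (neighbours S ET v) \<le> 1"
  shows "\<exists>g. packing_on VG EG ET (insert v S) g"
proof -
  have loopfree: "\<And>x. \<not> adj ET x x"
    using tree by (auto simp: is_tree_def dest: sgraph_not_adj_self)
  have finT: "finite VT" using tree by (simp add: is_tree_def sgraph_def)
  let ?U = "VG - f ` S"
  show ?thesis
  proof (cases "\<exists>a\<in>?U. \<forall>w\<in>S. adj ET w v \<longrightarrow> \<not> adj EG (f w) a")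
    case True
    then show ?thesis
      using packing_on_insert[OF f S(2) loopfree] by blast
  next
    case False
    have "finite S" using S(1) finT by (meson finite_insert finite_subset)
    moreover have "card (insert v S) \<le> card VT" using S finT by (intro card_mono)
    ultimately have "card S < card VT"
      using S(2) by simp
    then have "card ?U \<noteq> 0"
      using packing_on_card_unused[OF f finG] card_eq by linarith
    then have "?U \<noteq> {}" by force
    then obtain a where a: "a \<in> ?U" by blast
    with False obtain u where u: "u \<in> S" "adj ET u v" by blast
    have only_u: "w = u" if "w \<in> S" "adj ET w v" for w
      using low u that finT S card_le_Suc0_iff_eq[of "neighbours S ET v"]
      by (auto simp: neighbours_def finite_subset)
    have "?U \<subseteq> neighbours VG EG (f u)"
      using False only_u by (auto simp: neighbours_def adj_commute)
    then obtain z where z: "z \<in> S" "z \<noteq> u" "\<not> adj EG (f u) (f z)"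
      and z_fits: "\<And>w. w \<in> S \<Longrightarrow> adj ET z w \<Longrightarrow> \<not> adj EG a (f w)"
      using exists_swap_vertex[OF finG tree card_eq small f S u a] by blast
    have "\<not> adj ET z v" using z only_u by blast
    then have "packing_on VG EG ET (insert v S) (f(v := f z, z := a))"
      using z z_fits only_u a by (intro packing_on_insert_swap[OF f S(2) loopfree]) auto
    then show ?thesis by blast
  qed
qed

lemma exists_packing_on_subset:
  assumes finG: "finite VG" and tree: "is_tree VT ET"
    and card_eq: "card VG = card VT"
    and small: "3 * max_degree VG EG + num_leaves VT ET < card VT + 2"
    and "A \<subseteq> VT"
  shows "\<exists>f. packing_on VG EG ET A f"
proof -
  have sgT: "sgraph VT ET" and acyclic: "acyclic_graph VT ET" and finT: "finite VT"
    using tree by (auto simp: is_tree_def sgraph_def)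
  have "finite A" using assms(5) finT finite_subset by blast
  then show ?thesis
    using assms(5)
  proof (induction A rule: finite_remove_induct)
    case empty
    show ?case by (simp add: packing_on_def)
  next
    case (remove A)
    obtain v where v: "v \<in> A" "card (neighbours A ET v) \<le> 1"
      using acyclic_exists_neighbours_le_1[OF sgT acyclic remove.hyps(1) remove.prems remove.hyps(2)]
      by blast
    obtain f where "packing_on VG EG ET (A - {v}) f"
      using remove.IH[OF v(1)] remove.prems by blast
    moreover have "card (neighbours (A - {v}) ET v) \<le> card (neighbours A ET v)"
      using remove.hyps(1) by (intro card_mono) (auto simp: neighbours_def)
    ultimately have "\<exists>g. packing_on VG EG ET (insert v (A - {v})) g"
      using v remove.prems
      by (intro packing_on_insert_low_degree[OF finG tree card_eq small]) auto
    then show ?case using v(1) by (simp add: insert_absorb)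
  qed
qed

theorem corollary9:
  fixes VG :: "'a set" and EG :: "'a set set" and VT :: "'b set" and ET :: "'b set set"
    and n :: nat
  assumes "sgraph VG EG" and "is_tree VT ET"
    and "card VG = n" and "card VT = n"
    and "3 * int (max_degree VG EG) + int (num_leaves VT ET) - 2 < int n"
  shows "packs VG EG VT ET"
proof -
  have "3 * max_degree VG EG + num_leaves VT ET < card VT + 2"
    using assms(4,5) by linarith
  moreover have "finite VG"
    using assms(1) by (simp add: sgraph_def)
  ultimately obtain f where "packing_on VG EG ET VT f"
    using exists_packing_on_subset[of VG VT ET EG VT] assms(2-4) by auto
  then show ?thesis
    by (auto simp: packing_on_def packs_def adj_def)
qed

end
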